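(* Consider the problem $\min f(x)$ subject to $g(x)\in\mathcal K$, $x\in\mathcal M$. Let $x^*$ be a feasible point with $M(x^* )\neq\emptyset$ and let $y^*\in M(x^* )$. Then $M(x^* )$ is a singleton if and only if $$\left[Dg(x^* )T_{x^*}\mathcal M\right]^{\perp}\cap\mathcal R_{\mathcal N_{\mathcal K}(g(x^* ))}(y^* )=\{0\}.$$
   Context: $\mathcal M$ is a smooth Riemannian manifold with Riemannian gradient $\operatorname{grad}$; $\mathbb Y$ is a Euclidean space; $f:\mathcal M\to\mathbb R$, $g:\mathcal M\to\mathbb Y$ are twice continuously differentiable; $\mathcal K\subset\mathbb Y$ is a nonempty closed convex set. $Dg(x)$ is the differential of $g$ at $x$, $\mathcal N_{\mathcal K}(u)$ the normal cone of $\mathcal K$ at $u$. The Lagrangian is $L(x;y)=f(x)+\langle y,g(x)\rangle$ and $M(x)=\{y\in\mathbb Y:\operatorname{grad}_xL(x;y)=0,\ y\in\mathcal N_{\mathcal K}(g(x))\}$. For a closed set $\mathcal D$ and $u\in\mathcal D$, the radial cone is $\mathcal R_{\mathcal D}(u)=\{d:\exists t^*>0 \text{ with } u+td\in\mathcal D\ \forall t\in[0,t^*]\}$. Feasible means $g(x^* )\in\mathcal K$. *)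

theory Defs
  imports "HOL-Analysis.Analysis"
begin

definition normal_cone :: "'y::real_inner set \<Rightarrow> 'y \<Rightarrow> 'y set" where
  "normal_cone K u = {y. \<forall>k\<in>K. inner y (k - u) \<le> 0}"

definition radial_cone :: "'y::real_vector set \<Rightarrow> 'y \<Rightarrow> 'y set" where
  "radial_cone D u = {d. \<exists>ts>0. \<forall>t\<in>{0..ts}. u + t *\<^sub>R d \<in> D}"

text \<open>Riemannian gradient at a point: the tangent space T at the point is a linear
  subspace of a Euclidean space carrying the Riemannian metric as its inner product;
  for a function with differential phi (a linear functional on T) at that point,
  the gradient is the unique vector w in T with inner w v = phi v for all v in T.\<close>
definition rgrad :: "'a::euclidean_space set \<Rightarrow> ('a \<Rightarrow> real) \<Rightarrow> 'a" where
  "rgrad T phi = (THE w. w \<in> T \<and> (\<forall>v\<in>T. inner w v = phi v))"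

text \<open>Lagrange multiplier set M(x) at a point x, given the tangent space T of the manifold
  at x, the differential Df of f at x, the differential Dg of g at x and the value gx = g x:
  the Lagrangian L(x;y) = f x + inner y (g x) has differential v \<mapsto> Df v + inner y (Dg v).\<close>
definition multiplier_set ::
  "'a::euclidean_space set \<Rightarrow> ('a \<Rightarrow> real) \<Rightarrow> ('a \<Rightarrow> 'y::euclidean_space) \<Rightarrow> 'y set \<Rightarrow> 'y \<Rightarrow> 'y set" where
  "multiplier_set T Df Dg K gx =
     {y. rgrad T (\<lambda>v. Df v + inner y (Dg v)) = 0 \<and> y \<in> normal_cone K gx}"

end

theory Submission
  imports Defs
begin

text \<open>
  Once one multiplier y* is known, the stationarity condition is affine in y: the multiplier
  set is the normal cone intersected with the affine space y* + (Dg ` T)\<bottom>. The normal cone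
  is convex, hence every other
  point of it is reached from y* along a radial direction, and the intersection is trivial
  exactly when no nonzero direction of (Dg ` T)\<bottom> is radial.
\<close>

lemma rgrad_unique:
  fixes T :: "'a::euclidean_space set"
  assumes "subspace T" "w \<in> T" "\<forall>v\<in>T. inner w v = phi v"
  shows "rgrad T phi = w"
  unfolding rgrad_def
proof (rule the_equality)
  fix w' assume w': "w' \<in> T \<and> (\<forall>v\<in>T. inner w' v = phi v)"
  with assms have "w' - w \<in> T" "inner (w' - w) (w' - w) = 0"
    by (auto simp: subspace_diff inner_diff_left)
  then show "w' = w" by simp
qed (use assms in auto)

lemma subspace_riesz_representation:
  fixes T :: "'a::euclidean_space set"
  assumes T: "subspace T" and "linear phi"
  obtains p where "p \<in> T" "\<forall>v\<in>T. inner p v = phi v"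
proof -
  define r where "r = adjoint phi 1"
  have r: "phi v = inner r v" for v
    using adjoint_works[OF \<open>linear phi\<close>, of v 1] by (simp add: r_def inner_commute)
  obtain p q where p: "p \<in> span T" and q: "\<And>w. w \<in> span T \<Longrightarrow> orthogonal q w" and "r = p + q"
    using orthogonal_subspace_decomp_exists by blast
  have "inner p v = phi v" if "v \<in> T" for v
    using q[of v] that r[of v] \<open>r = p + q\<close> by (simp add: span_base orthogonal_def inner_add_left)
  moreover have "p \<in> T" using p T span_minimal[of T T] by blast
  ultimately show thesis using that by blast
qed

lemma rgrad_eq_0_iff:
  fixes T :: "'a::euclidean_space set"
  assumes T: "subspace T" and "linear phi"
  shows "rgrad T phi = 0 \<longleftrightarrow> (\<forall>v\<in>T. phi v = 0)"
proof -
  obtain p where p: "p \<in> T" "\<forall>v\<in>T. inner p v = phi v"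
    using subspace_riesz_representation[OF assms] .
  have "p = 0 \<longleftrightarrow> (\<forall>v\<in>T. phi v = 0)"
  proof
    assume "\<forall>v\<in>T. phi v = 0"
    then have "inner p p = 0" using p by simp
    then show "p = 0" by simp
  qed (use p in simp)
  then show ?thesis using rgrad_unique[OF T p] by simp
qed

lemma convex_normal_cone: "convex (normal_cone K u)"
proof -
  have "normal_cone K u = (\<Inter>k\<in>K. {y. inner (k - u) y \<le> 0})"
    by (auto simp: normal_cone_def inner_commute)
  then show ?thesis by (simp add: convex_INT convex_halfspace_le)
qed

lemma convex_diff_in_radial_cone:
  assumes "convex D" "u \<in> D" "v \<in> D"
  shows "v - u \<in> radial_cone D u"
proof -
  have "u + t *\<^sub>R (v - u) \<in> D" if "t \<in> {0..1}" for t :: real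
    using convexD_alt[OF assms(1-3), of t] that by (simp add: algebra_simps)
  then show ?thesis unfolding radial_cone_def by (intro CollectI exI[of _ 1]) auto
qed

lemma convex_inter_translate_singleton_iff:
  assumes "convex C" "y \<in> C" "subspace W"
  shows "{z \<in> C. z - y \<in> W} = {y} \<longleftrightarrow> W \<inter> radial_cone C y = {0}"
proof
  assume single: "{z \<in> C. z - y \<in> W} = {y}"
  have "d = 0" if d: "d \<in> W" "d \<in> radial_cone C y" for d
  proof -
    obtain t where "t > 0" "\<forall>s\<in>{0..t}. y + s *\<^sub>R d \<in> C"
      using d(2) unfolding radial_cone_def by blast
    then have "y + t *\<^sub>R d \<in> C" by simp
    moreover have "(y + t *\<^sub>R d) - y \<in> W"
      using d(1) \<open>subspace W\<close> by (simp add: subspace_scale)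
    ultimately have "y + t *\<^sub>R d \<in> {z \<in> C. z - y \<in> W}" by blast
    then have "y + t *\<^sub>R d = y" using single by blast
    then show "d = 0" using \<open>t > 0\<close> by simp
  qed
  moreover have "0 \<in> radial_cone C y"
    unfolding radial_cone_def using \<open>y \<in> C\<close> by (intro CollectI exI[of _ 1]) simp
  ultimately show "W \<inter> radial_cone C y = {0}"
    using subspace_0[OF \<open>subspace W\<close>] by blast
next
  assume no_radial: "W \<inter> radial_cone C y = {0}"
  have "z = y" if "z \<in> C" "z - y \<in> W" for z
  proof -
    have "z - y \<in> W \<inter> radial_cone C y"
      using convex_diff_in_radial_cone[OF assms(1,2) that(1)] that(2) by blast
    then show "z = y" using no_radial by simp
  qed
  then show "{z \<in> C. z - y \<in> W} = {y}"
    using assms(2) subspace_0[OF \<open>subspace W\<close>] by auto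
qed

lemma multiplier_set_eq:
  assumes "subspace T" "linear Df" "linear Dg"
  shows "multiplier_set T Df Dg K gx =
    {y \<in> normal_cone K gx. \<forall>v\<in>T. Df v + inner y (Dg v) = 0}"
proof -
  have "linear (\<lambda>v. Df v + inner y (Dg v))" for y
    using assms(2,3) by (intro linear_compose_add linear_compose[of Dg "inner y", unfolded o_def]
        bounded_linear.linear[OF bounded_linear_inner_right])
  then show ?thesis
    unfolding multiplier_set_def using rgrad_eq_0_iff[OF assms(1)] by auto
qed

lemma multiplier_set_eq_translate:
  assumes "subspace T" "linear Df" "linear Dg" "ystar \<in> multiplier_set T Df Dg K gx"
  shows "multiplier_set T Df Dg K gx =
    {y \<in> normal_cone K gx. y - ystar \<in> orthogonal_comp (Dg ` T)}"
proof -
  have stat: "\<forall>v\<in>T. Df v + inner ystar (Dg v) = 0"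
    using assms(4) by (simp add: multiplier_set_eq[OF assms(1-3)])
  have "(\<forall>v\<in>T. Df v + inner y (Dg v) = 0) \<longleftrightarrow> (\<forall>v\<in>T. inner (Dg v) (y - ystar) = 0)" for y
  proof -
    have "Df v + inner y (Dg v) = inner (Dg v) (y - ystar)" if "v \<in> T" for v
      using stat that by (auto simp: inner_diff_right inner_commute algebra_simps)
    then show ?thesis by simp
  qed
  then show ?thesis
    by (auto simp: multiplier_set_eq[OF assms(1-3)] orthogonal_comp_def orthogonal_def)
qed

theorem proposition2:
  fixes T :: "'a::euclidean_space set"
    and Df :: "'a \<Rightarrow> real"
    and Dg :: "'a \<Rightarrow> 'y::euclidean_space"
    and K :: "'y set"
    and gx ystar :: 'y
  assumes "subspace T"
    and "linear Df"
    and "linear Dg"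
    and "K \<noteq> {}" and "closed K" and "convex K"
    and "gx \<in> K"
    and "multiplier_set T Df Dg K gx \<noteq> {}"
    and "ystar \<in> multiplier_set T Df Dg K gx"
  shows "is_singleton (multiplier_set T Df Dg K gx) \<longleftrightarrow>
         orthogonal_comp (Dg ` T) \<inter> radial_cone (normal_cone K gx) ystar = {0}"
proof -
  let ?M = "multiplier_set T Df Dg K gx"
  have "is_singleton ?M \<longleftrightarrow> ?M = {ystar}"
    using assms(9) by (auto simp: is_singleton_def)
  moreover have "ystar \<in> normal_cone K gx"
    using assms(9) by (simp add: multiplier_set_def)
  ultimately show ?thesis
    using multiplier_set_eq_translate[OF assms(1-3,9)]
      convex_inter_translate_singleton_iff[OF convex_normal_cone _ subspace_orthogonal_comp]
    by simp
qed

end
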